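(* For every fixed $j\in[0,1]$, the function $c\mapsto g_c(j)$ is increasing on $c>0$, where $$g_c(j)=4\int_0^{c\sqrt{1-j^2}}\frac{\sqrt{(c^2(1-j^2)-z^2)(c^4+(1-c^2)z^2)}}{c(c^2-z^2)}\,dz.$$ Consequently, for $c_1<c_2$ one has $\mathbb{X}_{\Omega_{c_1}}\subset\mathbb{X}_{\Omega_{c_2}}$.
   Context: $\Omega_c\subset\mathbb{R}^2_{\ge0}$ is the relatively open region bounded by the coordinate axes and the curve $(g_c(j),g_c(j)+2\pi j)$, $0\le j\le1$, together with $(g_c(-j)-2\pi j,g_c(-j))$, $-1\le j\le0$. $\mathbb{X}_\Omega=\{(z_1,z_2)\in\mathbb{C}^2:(\pi|z_1|^2,\pi|z_2|^2)\in\Omega\}$. *)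

theory Defs
  imports "HOL-Analysis.Analysis"
begin

text \<open>The function g_c(j) (Henstock-Kurzweil integral; the integrand is nonnegative
  and integrable, with an integrable singularity at the endpoint when j = 0).\<close>
definition gfun :: "real \<Rightarrow> real \<Rightarrow> real" where
  "gfun c j = 4 * integral {0 .. c * sqrt (1 - j\<^sup>2)}
     (\<lambda>z. sqrt ((c\<^sup>2 * (1 - j\<^sup>2) - z\<^sup>2) * (c ^ 4 + (1 - c\<^sup>2) * z\<^sup>2))
            / (c * (c\<^sup>2 - z\<^sup>2)))"

definition curve :: "real \<Rightarrow> (real \<times> real) set" where
  "curve c = (\<lambda>j. (gfun c j, gfun c j + 2 * pi * j)) ` {0..1}
           \<union> (\<lambda>j. (gfun c (-j) - 2 * pi * j, gfun c (-j))) ` {-1..0}"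

definition boundary_omega :: "real \<Rightarrow> (real \<times> real) set" where
  "boundary_omega c = curve c \<union> ({0 .. 2 * pi} \<times> {0}) \<union> ({0} \<times> {0 .. 2 * pi})"

text \<open>Omega_c: the region bounded by the axes and the curve, relatively open in the
  closed quadrant, i.e. the closed region minus the curve.\<close>
definition Omega :: "real \<Rightarrow> (real \<times> real) set" where
  "Omega c = (inside (boundary_omega c) \<union> boundary_omega c) - curve c"

definition toric :: "(real \<times> real) set \<Rightarrow> (complex \<times> complex) set" where
  "toric \<Omega> = {(z1, z2). (pi * (cmod z1)\<^sup>2, pi * (cmod z2)\<^sup>2) \<in> \<Omega>}"

end

theory Submission
  imports Defs
begin

text \<open>The substitution z = c t turns g_c(j) into 4 times the integral over [0, a], a = sqrt(1 - j^2),
  of sqrt(a^2 - t^2) sqrt(c^2 (1 - t^2) + t^2) / (1 - t^2), whose integrand is visibly increasing in c.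
  It is dominated by max c 1 / sqrt(1 - t^2), so the integral is finite and, by dominated
  convergence, continuous in a.
  Writing d = y - x, the curve bounding Omega_c is the graph x + y = 2 g_c(|d| / 2pi) + |d| over
  |d| <= 2pi, and Omega_c consists of the points of the quadrant strictly below this graph.
  Indeed, the open region below the graph is a bounded open set whose frontier lies in the boundary
  of Omega_c, so it is inside that boundary, while every point outside the closed region escapes to
  infinity along a ray avoiding it. Increasing c raises the graph and therefore enlarges Omega_c.\<close>

section \<open>The integral g_c(j)\<close>

text \<open>The cut-off at t = a lets all a in [0, 1] share the domain of integration {0..<1}.\<close>

definition g_kernel :: "real \<Rightarrow> real \<Rightarrow> real \<Rightarrow> real" where
  "g_kernel c a t = sqrt (max (a\<^sup>2 - t\<^sup>2) 0) * sqrt (c\<^sup>2 * (1 - t\<^sup>2) + t\<^sup>2) / (1 - t\<^sup>2)"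

definition g_integral :: "real \<Rightarrow> real \<Rightarrow> real" where
  "g_integral c a = integral {0..<1} (g_kernel c a)"

lemma integrable_inverse_sqrt_one_minus_square:
  "(\<lambda>t::real. inverse (sqrt (1 - t\<^sup>2))) integrable_on {0..<1}"
proof -
  have "((\<lambda>t::real. inverse (sqrt (1 - t\<^sup>2))) has_integral (arcsin 1 - arcsin 0)) {0..1}"
  proof (rule fundamental_theorem_of_calculus_interior)
    show "continuous_on {0..1::real} arcsin"
      by (intro continuous_on_arcsin continuous_on_id) auto
    fix x :: real assume "x \<in> {0<..<1}"
    then show "(arcsin has_vector_derivative inverse (sqrt (1 - x\<^sup>2))) (at x)"
      using DERIV_arcsin[of x] by (simp add: has_real_derivative_iff_has_vector_derivative)
  qed simp
  then have Icc: "(\<lambda>t::real. inverse (sqrt (1 - t\<^sup>2))) integrable_on {0..1}" by blast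
  show ?thesis by (rule integrable_spike_set[OF Icc]; rule negligible_subset[of "{1}"]) auto
qed

lemma one_minus_square_pos: "t \<in> {0..<1} \<Longrightarrow> 0 < 1 - (t::real)\<^sup>2"
  by (simp add: abs_square_less_1)

lemma g_kernel_nonneg:
  assumes "t \<in> {0..<1}" shows "0 \<le> g_kernel c a t"
proof -
  have "0 < 1 - t\<^sup>2" using assms by (rule one_minus_square_pos)
  then show ?thesis unfolding g_kernel_def by (intro divide_nonneg_pos mult_nonneg_nonneg) auto
qed

lemma g_kernel_le:
  assumes "t \<in> {0..<1}" "0 \<le> a" "a \<le> 1" "0 < c"
  shows "g_kernel c a t \<le> max c 1 * inverse (sqrt (1 - t\<^sup>2))"
proof -
  define y where "y = 1 - t\<^sup>2"
  define M where "M = max c 1"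
  have y: "0 < y" unfolding y_def using assms(1) by (rule one_minus_square_pos)
  have M: "1 \<le> M" "c \<le> M" unfolding M_def by auto
  have "a\<^sup>2 \<le> 1" using assms by (simp add: power_le_one)
  then have first: "sqrt (max (a\<^sup>2 - t\<^sup>2) 0) \<le> sqrt y"
    using y unfolding y_def by (intro real_sqrt_le_mono) auto
  have "c\<^sup>2 * y + t\<^sup>2 \<le> M\<^sup>2 * y + M\<^sup>2 * t\<^sup>2"
  proof (intro add_mono mult_right_mono)
    show "c\<^sup>2 \<le> M\<^sup>2" using M assms by (intro power_mono) auto
    show "t\<^sup>2 \<le> M\<^sup>2 * t\<^sup>2" using M by (simp add: mult_le_cancel_right1 one_le_power)
  qed (use y in auto)
  also have "\<dots> = M\<^sup>2" unfolding y_def by (simp add: algebra_simps)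
  finally have second: "sqrt (c\<^sup>2 * y + t\<^sup>2) \<le> M"
    using M by (metis abs_of_nonneg order_trans real_sqrt_abs real_sqrt_le_mono zero_le_one)
  have "g_kernel c a t \<le> sqrt y * M / y"
    unfolding g_kernel_def y_def[symmetric] using y first second
    by (intro divide_right_mono mult_mono) auto
  also have "\<dots> = M * inverse (sqrt y)"
    using y by (simp add: field_simps)
  finally show ?thesis unfolding M_def y_def .
qed

lemma continuous_on_g_kernel: "continuous_on {0..<1} (g_kernel c a)"
  unfolding g_kernel_def by (intro continuous_intros) (auto simp: power2_eq_1_iff)

lemma g_kernel_integrable:
  assumes "0 \<le> a" "a \<le> 1" "0 < c"
  shows "g_kernel c a integrable_on {0..<1}"
proof (rule measurable_bounded_by_integrable_imp_integrable)
  show "g_kernel c a \<in> borel_measurable (lebesgue_on {0..<1})"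
    by (rule continuous_imp_measurable_on_sets_lebesgue[OF continuous_on_g_kernel]) auto
  show "(\<lambda>t. max c 1 * inverse (sqrt (1 - t\<^sup>2))) integrable_on {0..<1}"
    using integrable_cmul[OF integrable_inverse_sqrt_one_minus_square] by simp
  fix t :: real assume "t \<in> {0..<1}"
  then show "norm (g_kernel c a t) \<le> max c 1 * inverse (sqrt (1 - t\<^sup>2))"
    using g_kernel_le[OF _ assms] g_kernel_nonneg by auto
qed auto

lemma integral_g_kernel_Icc:
  assumes "0 \<le> a" "a \<le> 1"
  shows "integral {0..a} (g_kernel c a) = g_integral c a"
proof -
  have "integral {0..a} (g_kernel c a) = integral ({0..a} \<inter> {0..<1}) (g_kernel c a)"
    by (rule integral_spike_set; rule negligible_subset[of "{1}"]) (use assms in auto)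
  also have "\<dots> = integral {0..<1} (\<lambda>t. if t \<in> {0..a} then g_kernel c a t else 0)"
    by (rule integral_restrict_Int[symmetric])
  also have "\<dots> = g_integral c a"
    unfolding g_integral_def
  proof (rule integral_cong)
    fix t :: real assume t: "t \<in> {0..<1}"
    show "(if t \<in> {0..a} then g_kernel c a t else 0) = g_kernel c a t"
    proof (cases "t \<le> a")
      case False
      then have "a\<^sup>2 \<le> t\<^sup>2" using assms t by (intro power_mono) auto
      then show ?thesis using False by (auto simp: g_kernel_def)
    qed (use t in auto)
  qed
  finally show ?thesis .
qed

lemma integral_stretch_Icc:
  fixes f :: "real \<Rightarrow> 'b::real_normed_vector"
  assumes "0 < c"
  shows "integral {c * a..c * b} f = c *\<^sub>R integral {a..b} (\<lambda>t. f (c * t))"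
proof -
  have "integral {a..b} (\<lambda>t. f (c * t)) = (1 / c) *\<^sub>R integral {c * a..c * b} f"
    using integral_stretch_real[of c "c * a" "c * b" f] assms by simp
  then show ?thesis using assms by simp
qed

lemma gfun_integrand_stretch:
  assumes "0 < c" "t \<in> {0..a}" "a\<^sup>2 = 1 - j\<^sup>2"
  shows "c * (sqrt ((c\<^sup>2 * (1 - j\<^sup>2) - (c * t)\<^sup>2) * (c ^ 4 + (1 - c\<^sup>2) * (c * t)\<^sup>2))
             / (c * (c\<^sup>2 - (c * t)\<^sup>2)))
         = g_kernel c a t"
proof -
  have "t\<^sup>2 \<le> a\<^sup>2" using assms(2) by (intro power_mono) auto
  have "c ^ 4 = (c\<^sup>2)\<^sup>2" by simp
  then have "sqrt (c ^ 4) = c\<^sup>2" by (simp only: real_sqrt_abs) simp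
  have "(c\<^sup>2 * (1 - j\<^sup>2) - (c * t)\<^sup>2) * (c ^ 4 + (1 - c\<^sup>2) * (c * t)\<^sup>2)
      = c ^ 4 * ((a\<^sup>2 - t\<^sup>2) * (c\<^sup>2 * (1 - t\<^sup>2) + t\<^sup>2))"
    unfolding assms(3) by (simp add: algebra_simps power2_eq_square power4_eq_xxxx)
  then have numerator:
    "sqrt ((c\<^sup>2 * (1 - j\<^sup>2) - (c * t)\<^sup>2) * (c ^ 4 + (1 - c\<^sup>2) * (c * t)\<^sup>2))
      = c\<^sup>2 * (sqrt (max (a\<^sup>2 - t\<^sup>2) 0) * sqrt (c\<^sup>2 * (1 - t\<^sup>2) + t\<^sup>2))"
    using \<open>t\<^sup>2 \<le> a\<^sup>2\<close> \<open>sqrt (c ^ 4) = c\<^sup>2\<close> by (simp add: real_sqrt_mult)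
  have denominator: "c * (c\<^sup>2 - (c * t)\<^sup>2) = c * c\<^sup>2 * (1 - t\<^sup>2)"
    by (simp add: algebra_simps power2_eq_square)
  have "c * (c\<^sup>2 * (sqrt (max (a\<^sup>2 - t\<^sup>2) 0) * sqrt (c\<^sup>2 * (1 - t\<^sup>2) + t\<^sup>2)))
        / (c * c\<^sup>2 * (1 - t\<^sup>2))
      = (c * c\<^sup>2) * (sqrt (max (a\<^sup>2 - t\<^sup>2) 0) * sqrt (c\<^sup>2 * (1 - t\<^sup>2) + t\<^sup>2))
        / ((c * c\<^sup>2) * (1 - t\<^sup>2))"
    by (simp only: mult.assoc)
  also have "\<dots> = g_kernel c a t"
    unfolding g_kernel_def using assms(1) by (subst mult_divide_mult_cancel_left) auto
  finally show ?thesis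
    unfolding numerator denominator by (simp only: times_divide_eq_right)
qed

lemma gfun_eq_g_integral:
  assumes c: "0 < c" and j: "j \<in> {0..1}"
  shows "gfun c j = 4 * g_integral c (sqrt (1 - j\<^sup>2))"
proof -
  define a where "a = sqrt (1 - j\<^sup>2)"
  have "j\<^sup>2 \<le> 1" using j by (simp add: power_le_one)
  then have a: "0 \<le> a" "a \<le> 1" "a\<^sup>2 = 1 - j\<^sup>2" unfolding a_def by auto
  define F where "F z = sqrt ((c\<^sup>2 * (1 - j\<^sup>2) - z\<^sup>2) * (c ^ 4 + (1 - c\<^sup>2) * z\<^sup>2))
    / (c * (c\<^sup>2 - z\<^sup>2))" for z
  have "integral {0..c * a} F = c * integral {0..a} (\<lambda>t. F (c * t))"
    using integral_stretch_Icc[OF c, of 0 a F] by simp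
  also have "\<dots> = integral {0..a} (\<lambda>t. c * F (c * t))"
    by (simp only: integral_mult_right)
  also have "\<dots> = integral {0..a} (g_kernel c a)"
    by (rule integral_cong) (use gfun_integrand_stretch[OF c _ a(3)] in \<open>simp add: F_def\<close>)
  also have "\<dots> = g_integral c a"
    using a(1,2) by (rule integral_g_kernel_Icc)
  finally show ?thesis unfolding gfun_def a_def F_def by simp
qed

lemma g_integral_mono:
  assumes "0 < c" "c \<le> c'" "0 \<le> a" "a \<le> 1"
  shows "g_integral c a \<le> g_integral c' a"
  unfolding g_integral_def
proof (rule integral_le)
  show "g_kernel c a integrable_on {0..<1}" "g_kernel c' a integrable_on {0..<1}"
    using assms by (auto intro: g_kernel_integrable)
  fix t :: real assume "t \<in> {0..<1}"
  then have y: "0 < 1 - t\<^sup>2" by (rule one_minus_square_pos)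
  have "c\<^sup>2 \<le> c'\<^sup>2" using assms by (intro power_mono) auto
  then have "c\<^sup>2 * (1 - t\<^sup>2) \<le> c'\<^sup>2 * (1 - t\<^sup>2)" using y by (intro mult_right_mono) auto
  then show "g_kernel c a t \<le> g_kernel c' a t" unfolding g_kernel_def using y
    by (intro divide_right_mono mult_left_mono real_sqrt_le_mono) auto
qed

lemma g_integral_nonneg: "0 \<le> g_integral c a"
  unfolding g_integral_def
  by (cases "g_kernel c a integrable_on {0..<1}")
     (auto intro: integral_nonneg g_kernel_nonneg simp: not_integrable_integral)

lemma continuous_on_g_integral:
  assumes "0 < c"
  shows "continuous_on {0..1} (g_integral c)"
proof (rule continuous_on_sequentiallyI)
  fix x :: "nat \<Rightarrow> real" and a
  assume x: "\<forall>n. x n \<in> {0..1}" and "a \<in> {0..1}" and lim: "x \<longlonglongrightarrow> a"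
  have "(\<lambda>n. integral {0..<1} (g_kernel c (x n))) \<longlonglongrightarrow> integral {0..<1} (g_kernel c a)"
  proof (rule dominated_convergence(2))
    show "g_kernel c (x n) integrable_on {0..<1}" for n
      using x assms by (auto intro: g_kernel_integrable)
    show "(\<lambda>t. max c 1 * inverse (sqrt (1 - t\<^sup>2))) integrable_on {0..<1}"
      using integrable_cmul[OF integrable_inverse_sqrt_one_minus_square] by simp
    show "norm (g_kernel c (x n) t) \<le> max c 1 * inverse (sqrt (1 - t\<^sup>2))"
      if "t \<in> {0..<1}" for n t
      using g_kernel_le[OF that _ _ assms, of "x n"] g_kernel_nonneg[OF that] x by auto
    show "(\<lambda>n. g_kernel c (x n) t) \<longlonglongrightarrow> g_kernel c a t" if "t \<in> {0..<1}" for t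
    proof -
      have "1 - t\<^sup>2 \<noteq> 0" using one_minus_square_pos[OF that] by simp
      then show ?thesis unfolding g_kernel_def by (intro tendsto_intros lim)
    qed
  qed
  then show "(\<lambda>n. g_integral c (x n)) \<longlonglongrightarrow> g_integral c a" by (simp add: g_integral_def)
qed

lemma mono_on_gfun:
  assumes "j \<in> {0..1}"
  shows "mono_on {0<..} (\<lambda>c. gfun c j)"
proof (rule mono_onI)
  fix c c' :: real assume "c \<in> {0<..}" "c \<le> c'"
  moreover have "j\<^sup>2 \<le> 1" using assms by (simp add: power_le_one)
  ultimately show "gfun c j \<le> gfun c' j"
    using assms by (auto simp: gfun_eq_g_integral intro!: g_integral_mono)
qed

lemma continuous_on_gfun:
  assumes "0 < c"
  shows "continuous_on {0..1} (gfun c)"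
proof -
  have "(\<lambda>j::real. sqrt (1 - j\<^sup>2)) ` {0..1} \<subseteq> {0..1}"
    by (auto simp: power_le_one)
  then have "continuous_on {0..1} (\<lambda>j. 4 * g_integral c (sqrt (1 - j\<^sup>2)))"
    by (intro continuous_intros continuous_on_compose2[OF continuous_on_g_integral[OF assms]])
  then show ?thesis
    by (rule continuous_on_cong[THEN iffD1, rotated 2]) (auto simp: gfun_eq_g_integral[OF assms])
qed

lemma gfun_nonneg: "0 < c \<Longrightarrow> j \<in> {0..1} \<Longrightarrow> 0 \<le> gfun c j"
  using gfun_eq_g_integral g_integral_nonneg by simp

lemma gfun_one [simp]: "gfun c 1 = 0"
  unfolding gfun_def by simp

section \<open>Recognising points inside a set\<close>

lemma open_subset_inside:
  fixes U K B :: "'a::real_normed_vector set"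
  assumes "open U" "closed K" "bounded K" "U \<subseteq> K" "K - U \<subseteq> B" "U \<inter> B = {}"
  shows "U \<subseteq> inside B"
proof
  fix p assume p: "p \<in> U"
  let ?C = "connected_component_set (- B) p"
  have "p \<notin> B" using p assms(6) by auto
  have "?C \<subseteq> U"
  proof (rule ccontr)
    assume "\<not> ?C \<subseteq> U"
    moreover have "p \<in> ?C \<inter> U" using p \<open>p \<notin> B\<close> by (simp add: connected_component_refl)
    ultimately have "?C \<inter> frontier U \<noteq> {}"
      using connected_Int_frontier[of ?C U] by blast
    then obtain r where r: "r \<in> ?C" "r \<in> frontier U" by auto
    have "closure U \<subseteq> K" using assms(2,4) by (rule closure_minimal[rotated])
    then have "r \<in> B"
      using r(2) assms(1,5) interior_open[OF assms(1)] unfolding frontier_def by auto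
    then show False using r(1) connected_component_subset by blast
  qed
  then have "bounded ?C" using assms(3,4) bounded_subset by blast
  then show "p \<in> inside B" unfolding inside_def using \<open>p \<notin> B\<close> by auto
qed

lemma unbounded_ray:
  fixes p v :: "'a::real_normed_vector"
  assumes "v \<noteq> 0"
  shows "\<not> bounded ((\<lambda>t. p + t *\<^sub>R v) ` {0..})"
proof
  assume "bounded ((\<lambda>t. p + t *\<^sub>R v) ` {0..})"
  then obtain M where M: "\<And>t. 0 \<le> t \<Longrightarrow> norm (p + t *\<^sub>R v) \<le> M"
    by (auto simp: bounded_iff)
  define t where "t = (\<bar>M\<bar> + norm p + 1) / norm v"
  have "0 \<le> t" "norm (t *\<^sub>R v) = \<bar>M\<bar> + norm p + 1"
    unfolding t_def using assms by auto
  moreover have "norm (t *\<^sub>R v) \<le> norm (p + t *\<^sub>R v) + norm p"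
    by (metis add_diff_cancel_left' norm_triangle_ineq4 add.commute)
  ultimately show False using M[of t] by linarith
qed

lemma ray_disjoint_imp_notin_inside:
  fixes p v :: "'a::real_normed_vector"
  assumes "v \<noteq> 0" "\<And>t. 0 \<le> t \<Longrightarrow> p + t *\<^sub>R v \<notin> B"
  shows "p \<notin> inside B"
proof -
  let ?R = "(\<lambda>t. p + t *\<^sub>R v) ` {0..}"
  have "inside B \<subseteq> - B - ?R"
    using assms(2) unbounded_ray[OF assms(1)]
    by (intro inside_subset[of ?R]) (auto intro!: connected_continuous_image continuous_intros)
  moreover have "p \<in> ?R" by (rule image_eqI[of _ _ 0]) auto
  ultimately show ?thesis by blast
qed

section \<open>The region Omega_c\<close>

text \<open>The value of x + y at the point of curve c with y - x = d.\<close>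

definition curve_level :: "real \<Rightarrow> real \<Rightarrow> real" where
  "curve_level c d = 2 * gfun c (\<bar>d\<bar> / (2 * pi)) + \<bar>d\<bar>"

definition closed_region :: "real \<Rightarrow> (real \<times> real) set" where
  "closed_region c = {p. \<bar>snd p - fst p\<bar> \<le> 2 * pi \<and> 0 \<le> fst p \<and> 0 \<le> snd p
                         \<and> fst p + snd p \<le> curve_level c (snd p - fst p)}"

definition open_region :: "real \<Rightarrow> (real \<times> real) set" where
  "open_region c = {p. \<bar>snd p - fst p\<bar> < 2 * pi \<and> 0 < fst p \<and> 0 < snd p
                       \<and> fst p + snd p < curve_level c (snd p - fst p)}"

lemma continuous_on_curve_level:
  assumes "0 < c"
  shows "continuous_on {-2 * pi..2 * pi} (curve_level c)"
  unfolding curve_level_def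
  by (intro continuous_intros continuous_on_compose2[OF continuous_on_gfun[OF assms]]) auto

lemma abs_le_curve_level: "0 < c \<Longrightarrow> \<bar>d\<bar> \<le> 2 * pi \<Longrightarrow> \<bar>d\<bar> \<le> curve_level c d"
  unfolding curve_level_def using gfun_nonneg[of c "\<bar>d\<bar> / (2 * pi)"] by auto

lemma curve_level_edge: "\<bar>d\<bar> = 2 * pi \<Longrightarrow> curve_level c d = 2 * pi"
  unfolding curve_level_def by simp

lemma curve_level_mono:
  assumes "0 < c" "c \<le> c'" "\<bar>d\<bar> \<le> 2 * pi"
  shows "curve_level c d \<le> curve_level c' d"
proof -
  have "\<bar>d\<bar> / (2 * pi) \<in> {0..1}" using assms(3) by auto
  then show ?thesis
    using mono_on_gfun assms(1,2) unfolding curve_level_def mono_on_def by fastforce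
qed

lemma curve_eq:
  assumes "0 < c"
  shows "curve c = {p. \<bar>snd p - fst p\<bar> \<le> 2 * pi \<and> 0 \<le> fst p \<and> 0 \<le> snd p
                       \<and> fst p + snd p = curve_level c (snd p - fst p)}"
proof (intro equalityI subsetI)
  fix p assume "p \<in> curve c"
  then have "p \<in> (\<lambda>j. (gfun c j, gfun c j + 2 * pi * j)) ` {0..1}
           \<union> (\<lambda>j. (gfun c (-j) - 2 * pi * j, gfun c (-j))) ` {-1..0}"
    unfolding curve_def .
  then consider j where "j \<in> {0..1}" "p = (gfun c j, gfun c j + 2 * pi * j)"
    | j where "j \<in> {0..1}" "p = (gfun c j + 2 * pi * j, gfun c j)"
  proof (elim UnE imageE)
    fix j assume "j \<in> {-1..0}" "p = (gfun c (- j) - 2 * pi * j, gfun c (- j))"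
    then show thesis using that(2)[of "- j"] by auto
  qed (rule that(1))
  then show "p \<in> {p. \<bar>snd p - fst p\<bar> \<le> 2 * pi \<and> 0 \<le> fst p \<and> 0 \<le> snd p
                     \<and> fst p + snd p = curve_level c (snd p - fst p)}"
    by cases (use gfun_nonneg[OF assms] in \<open>auto simp: curve_level_def abs_mult\<close>)
next
  fix p assume "p \<in> {p. \<bar>snd p - fst p\<bar> \<le> 2 * pi \<and> 0 \<le> fst p \<and> 0 \<le> snd p
                         \<and> fst p + snd p = curve_level c (snd p - fst p)}"
  then obtain x y where p: "p = (x, y)" "\<bar>y - x\<bar> \<le> 2 * pi"
    and level: "x + y = 2 * gfun c (\<bar>y - x\<bar> / (2 * pi)) + \<bar>y - x\<bar>"
    by (cases p) (auto simp: curve_level_def)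
  define j where "j = \<bar>y - x\<bar> / (2 * pi)"
  have j: "j \<in> {0..1}" "\<bar>y - x\<bar> = 2 * pi * j" using p(2) unfolding j_def by auto
  have level_j: "x + y = 2 * gfun c j + 2 * pi * j"
    using level j(2) unfolding j_def[symmetric] by simp
  show "p \<in> curve c"
  proof (cases "x \<le> y")
    case True
    then have "x = gfun c j" "y = gfun c j + 2 * pi * j" using level_j j(2) by auto
    then show ?thesis unfolding curve_def p(1) using j(1) by auto
  next
    case False
    then have "x = gfun c (- (- j)) - 2 * pi * (- j)" "y = gfun c (- (- j))"
      using level_j j(2) by auto
    moreover have "- j \<in> {-1..0}" using j(1) by auto
    ultimately show ?thesis unfolding curve_def p(1) by blast
  qed
qed

lemma boundary_omega_subset_closed_region:
  assumes "0 < c"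
  shows "boundary_omega c \<subseteq> closed_region c"
proof
  fix p assume "p \<in> boundary_omega c"
  then consider "p \<in> curve c" | "p \<in> {0 .. 2 * pi} \<times> {0}" | "p \<in> {0} \<times> {0 .. 2 * pi}"
    unfolding boundary_omega_def by blast
  then show "p \<in> closed_region c"
  proof cases
    case 1
    then show ?thesis unfolding curve_eq[OF assms] closed_region_def by auto
  next
    case 2
    then show ?thesis
      using abs_le_curve_level[OF assms, of "snd p - fst p"] unfolding closed_region_def by auto
  next
    case 3
    then show ?thesis
      using abs_le_curve_level[OF assms, of "snd p - fst p"] unfolding closed_region_def by auto
  qed
qed

lemma open_region_Int_boundary_omega: "0 < c \<Longrightarrow> open_region c \<inter> boundary_omega c = {}"
  unfolding open_region_def boundary_omega_def curve_eq by fastforce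

lemma closed_region_Diff_open_region:
  assumes "0 < c"
  shows "closed_region c - open_region c \<subseteq> boundary_omega c"
proof
  fix p assume p: "p \<in> closed_region c - open_region c"
  then obtain x y where xy: "p = (x, y)" "\<bar>y - x\<bar> \<le> 2 * pi" "0 \<le> x" "0 \<le> y"
    and le: "x + y \<le> curve_level c (y - x)"
    unfolding closed_region_def by (cases p) auto
  show "p \<in> boundary_omega c"
  proof (cases "x + y = curve_level c (y - x)")
    case True
    then show ?thesis using xy unfolding boundary_omega_def curve_eq[OF assms] by auto
  next
    case False
    then have "\<bar>y - x\<bar> \<noteq> 2 * pi" using le curve_level_edge xy by fastforce
    then have "x = 0 \<or> y = 0" using p xy le False unfolding open_region_def by auto
    then show ?thesis using xy unfolding boundary_omega_def by auto
  qed
qed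

lemma closed_closed_region:
  assumes "0 < c"
  shows "closed (closed_region c)"
proof -
  define K where "K = {p::real \<times> real. \<bar>snd p - fst p\<bar> \<le> 2 * pi \<and> 0 \<le> fst p \<and> 0 \<le> snd p}"
  have "closed K"
    unfolding K_def by (intro closed_Collect_conj closed_Collect_le continuous_intros)
  moreover have "continuous_on K (\<lambda>p. fst p + snd p - curve_level c (snd p - fst p))"
    by (intro continuous_intros continuous_on_compose2[OF continuous_on_curve_level[OF assms]])
       (auto intro!: continuous_intros simp: K_def)
  ultimately have "closed (K \<inter> (\<lambda>p. fst p + snd p - curve_level c (snd p - fst p)) -` {..0})"
    by (intro continuous_closed_preimage) auto
  also have "K \<inter> (\<lambda>p. fst p + snd p - curve_level c (snd p - fst p)) -` {..0} = closed_region c"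
    unfolding K_def closed_region_def by auto
  finally show ?thesis .
qed

lemma open_open_region:
  assumes "0 < c"
  shows "open (open_region c)"
proof -
  define K where "K = {p::real \<times> real. \<bar>snd p - fst p\<bar> < 2 * pi \<and> 0 < fst p \<and> 0 < snd p}"
  have "open K"
    unfolding K_def by (intro open_Collect_conj open_Collect_less continuous_intros)
  moreover have "continuous_on K (\<lambda>p. fst p + snd p - curve_level c (snd p - fst p))"
    by (intro continuous_intros continuous_on_compose2[OF continuous_on_curve_level[OF assms]])
       (auto intro!: continuous_intros simp: K_def)
  ultimately have "open (K \<inter> (\<lambda>p. fst p + snd p - curve_level c (snd p - fst p)) -` {..<0})"
    by (intro continuous_open_preimage) auto
  also have "K \<inter> (\<lambda>p. fst p + snd p - curve_level c (snd p - fst p)) -` {..<0} = open_region c"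
    unfolding K_def open_region_def by auto
  finally show ?thesis .
qed

lemma bounded_closed_region:
  assumes "0 < c"
  shows "bounded (closed_region c)"
proof -
  have "compact (curve_level c ` {-2 * pi..2 * pi})"
    using continuous_on_curve_level[OF assms] by (rule compact_continuous_image) auto
  then obtain M where M: "\<And>d. d \<in> {-2 * pi..2 * pi} \<Longrightarrow> curve_level c d \<le> M"
    using compact_imp_bounded bounded_real by (metis abs_le_iff image_eqI)
  have "closed_region c \<subseteq> cbox (0, 0) (M, M)"
  proof
    fix p assume p: "p \<in> closed_region c"
    then have "curve_level c (snd p - fst p) \<le> M"
      using M by (auto simp: closed_region_def abs_le_iff)
    then show "p \<in> cbox (0, 0) (M, M)"
      using p by (cases p) (auto simp: closed_region_def cbox_Pair_eq)
  qed
  then show ?thesis using bounded_cbox bounded_subset by blast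
qed

lemma escaping_ray_from_outside_closed_region:
  assumes "p \<notin> closed_region c"
  obtains v where "v \<noteq> 0" "\<And>t. 0 \<le> t \<Longrightarrow> p + t *\<^sub>R v \<notin> closed_region c"
proof -
  obtain x y where p: "p = (x, y)" by force
  consider "x < 0" | "0 \<le> x" "y < 0" | "0 \<le> x" "0 \<le> y" "y - x > 2 * pi"
    | "0 \<le> x" "0 \<le> y" "y - x < - 2 * pi"
    | "0 \<le> x" "0 \<le> y" "\<bar>y - x\<bar> \<le> 2 * pi" "x + y > curve_level c (y - x)"
    using assms p unfolding closed_region_def by force
  then show thesis
  proof cases
    case 1
    show thesis by (rule that[of "(-1, 0)"]) (use 1 p in \<open>auto simp: closed_region_def zero_prod_def\<close>)
  next
    case 2
    show thesis by (rule that[of "(0, -1)"]) (use 2 p in \<open>auto simp: closed_region_def zero_prod_def\<close>)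
  next
    case 3
    show thesis by (rule that[of "(0, 1)"]) (use 3 p in \<open>auto simp: closed_region_def zero_prod_def\<close>)
  next
    case 4
    show thesis by (rule that[of "(1, 0)"]) (use 4 p in \<open>auto simp: closed_region_def zero_prod_def\<close>)
  next
    case 5
    show thesis by (rule that[of "(1, 1)"]) (use 5 p in \<open>auto simp: closed_region_def zero_prod_def\<close>)
  qed
qed

lemma inside_boundary_omega_subset:
  assumes "0 < c"
  shows "inside (boundary_omega c) \<subseteq> closed_region c"
proof
  fix p assume inside: "p \<in> inside (boundary_omega c)"
  show "p \<in> closed_region c"
  proof (rule ccontr)
    assume "p \<notin> closed_region c"
    then obtain v where "v \<noteq> 0" "\<And>t. 0 \<le> t \<Longrightarrow> p + t *\<^sub>R v \<notin> closed_region c"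
      using escaping_ray_from_outside_closed_region by blast
    then have "p \<notin> inside (boundary_omega c)"
      using boundary_omega_subset_closed_region[OF assms] by (intro ray_disjoint_imp_notin_inside) auto
    then show False using inside by blast
  qed
qed

lemma inside_Un_boundary_omega:
  assumes "0 < c"
  shows "inside (boundary_omega c) \<union> boundary_omega c = closed_region c"
proof
  show "inside (boundary_omega c) \<union> boundary_omega c \<subseteq> closed_region c"
    using inside_boundary_omega_subset boundary_omega_subset_closed_region assms by blast
  have "open_region c \<subseteq> inside (boundary_omega c)"
    using assms
    by (intro open_subset_inside[of _ "closed_region c"] open_open_region closed_closed_region
        bounded_closed_region closed_region_Diff_open_region open_region_Int_boundary_omega)
       (auto simp: open_region_def closed_region_def)
  then show "closed_region c \<subseteq> inside (boundary_omega c) \<union> boundary_omega c"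
    using closed_region_Diff_open_region[OF assms] by blast
qed

lemma Omega_eq:
  assumes "0 < c"
  shows "Omega c = {p. \<bar>snd p - fst p\<bar> \<le> 2 * pi \<and> 0 \<le> fst p \<and> 0 \<le> snd p
                       \<and> fst p + snd p < curve_level c (snd p - fst p)}"
  unfolding Omega_def inside_Un_boundary_omega[OF assms] curve_eq[OF assms] closed_region_def
  by auto

lemma Omega_mono:
  assumes "0 < c" "c \<le> c'"
  shows "Omega c \<subseteq> Omega c'"
  unfolding Omega_eq[OF assms(1)] Omega_eq[OF order.strict_trans2[OF assms]]
  using curve_level_mono[OF assms] by (auto intro: order.strict_trans2)

theorem mainTheorem13:
  shows "(\<forall>j \<in> {0..1}. mono_on {0<..} (\<lambda>c. gfun c j))
       \<and> (\<forall>c1 c2. 0 < c1 \<longrightarrow> c1 < c2 \<longrightarrow> toric (Omega c1) \<subseteq> toric (Omega c2))"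
proof (intro conjI ballI allI impI)
  show "mono_on {0<..} (\<lambda>c. gfun c j)" if "j \<in> {0..1}" for j
    using that by (rule mono_on_gfun)
  show "toric (Omega c1) \<subseteq> toric (Omega c2)" if "0 < c1" "c1 < c2" for c1 c2
    using Omega_mono[of c1 c2] that unfolding toric_def by auto
qed

end
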